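(* For every $t\in(0,1)$, every $h>0$ and every nonnegative integer $n$, with $a=t/h$ and $b=(1-t)/h$, $$\sum_{k\ge0} B^{n-k}_k(t;h) = \int_0^1 \frac{x^{a-1}(1-x)^{b-1}}{(1+x)\,\mathrm{B}(a,b)}\,dx + (-1)^{n+2}\int_0^1 \frac{x^{a+n}(1-x)^{b-1}}{(1+x)\,\mathrm{B}(a,b)}\,dx,$$ where $\mathrm{B}(a,b)$ is the Beta function.
   Context: For $h\ge 0$, the $h$-Bernstein polynomials are $$B^m_k(t;h) = \binom{m}{k}\frac{\prod_{i=0}^{k-1}(t+ih)\prod_{i=0}^{m-k-1}(1-t+ih)}{\prod_{i=0}^{m-1}(1+ih)}$$ for integers $0\le k\le m$ (empty products equal $1$), and $B^m_k(t;h)=0$ for $m<k$. *)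

theory Defs
  imports "HOL-Analysis.Analysis"
begin

definition hBernstein :: "nat \<Rightarrow> nat \<Rightarrow> real \<Rightarrow> real \<Rightarrow> real" where
  "hBernstein m k t h =
     (if m < k then 0
      else real (m choose k) *
           (\<Prod>i<k. t + real i * h) * (\<Prod>i<m - k. 1 - t + real i * h) /
           (\<Prod>i<m. 1 + real i * h))"

end

theory Submission
  imports Defs
begin

(* With a = t/h and b = (1-t)/h the products in the definition of B^m_k(t;h) are Pochhammer
   symbols, and (a)_k (b)_(m-k) / (a+b)_m = B(a+k, b+m-k) / B(a,b).  Hence the h-Bernstein
   polynomial is the Beta(a,b)-average of the classical Bernstein polynomial binom(m,k) x^k (1-x)^(m-k).
   Summing along the diagonal m = n - k gives the average of sum_k binom(n-k,k) x^k (1-x)^(n-2k),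
   a Lucas sequence with characteristic roots 1 and -x, i.e. (1 - (-x)^(n+1)) / (1 + x);
   splitting this into two terms gives the two integrals. *)

definition diagonal_binomial_sum :: "'a::comm_semiring_1 \<Rightarrow> 'a \<Rightarrow> nat \<Rightarrow> 'a" where
  "diagonal_binomial_sum u v n = (\<Sum>k\<le>n. of_nat ((n - k) choose k) * u ^ k * v ^ (n - 2 * k))"

lemma binomial_Suc_diff_Suc: "(Suc n - k) choose Suc k = ((n - k) choose k) + ((n - k) choose Suc k)"
  by (cases "k \<le> n") (simp_all add: Suc_diff_le)

lemma diagonal_binomial_sum_Suc_Suc:
  "diagonal_binomial_sum u v (Suc (Suc n)) =
     v * diagonal_binomial_sum u v (Suc n) + u * diagonal_binomial_sum u v n"
proof -
  define c where "c k = of_nat ((n - k) choose Suc k) * u ^ Suc k" for k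
  have shift: "diagonal_binomial_sum u v (Suc (Suc n)) =
      v ^ Suc (Suc n) + (\<Sum>k\<le>Suc n. of_nat ((Suc n - k) choose Suc k) * u ^ Suc k * v ^ (n - 2 * k))"
    unfolding diagonal_binomial_sum_def by (subst sum.atMost_Suc_shift) simp
  have lower: "(\<Sum>k\<le>Suc n. of_nat ((n - k) choose k) * u ^ Suc k * v ^ (n - 2 * k)) =
      u * diagonal_binomial_sum u v n"
    unfolding diagonal_binomial_sum_def by (simp add: sum_distrib_left mult_ac)
  have "diagonal_binomial_sum u v (Suc n) = v ^ Suc n + (\<Sum>k\<le>n. c k * v ^ (n - 1 - 2 * k))"
    unfolding diagonal_binomial_sum_def c_def by (subst sum.atMost_Suc_shift) (simp add: mult_ac)
  moreover have "v * (c k * v ^ (n - 1 - 2 * k)) = c k * v ^ (n - 2 * k)" for k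
    \<comment> \<open>truncated subtraction is harmless: c k = 0 unless 2 * k < n\<close>
  proof (cases "Suc k \<le> n - k")
    case True
    then have "n - 2 * k = Suc (n - 1 - 2 * k)" by simp
    then show ?thesis by (simp add: mult_ac)
  qed (simp add: c_def not_le binomial_eq_0)
  ultimately have upper: "v * diagonal_binomial_sum u v (Suc n) =
      v ^ Suc (Suc n) + (\<Sum>k\<le>Suc n. c k * v ^ (n - 2 * k))"
    by (simp add: distrib_left sum_distrib_left c_def)
  show ?thesis
    unfolding shift binomial_Suc_diff_Suc upper lower[symmetric] c_def
    by (simp add: sum.distrib algebra_simps)
qed

lemma diagonal_binomial_sum_roots:
  fixes r s :: "'a::comm_ring_1"
  shows "(r - s) * diagonal_binomial_sum (- (r * s)) (r + s) n = r ^ Suc n - s ^ Suc n"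
proof (induction n rule: induct_nat_012)
  case 0
  show ?case by (simp add: diagonal_binomial_sum_def)
next
  case 1
  show ?case by (simp add: diagonal_binomial_sum_def algebra_simps)
next
  case (ge2 n)
  have "(r - s) * diagonal_binomial_sum (- (r * s)) (r + s) (Suc (Suc n)) =
      (r + s) * ((r - s) * diagonal_binomial_sum (- (r * s)) (r + s) (Suc n))
      - r * s * ((r - s) * diagonal_binomial_sum (- (r * s)) (r + s) n)"
    by (simp add: diagonal_binomial_sum_Suc_Suc algebra_simps)
  also have "\<dots> = (r + s) * (r ^ Suc (Suc n) - s ^ Suc (Suc n)) - r * s * (r ^ Suc n - s ^ Suc n)"
    by (simp only: ge2.IH)
  also have "\<dots> = r ^ Suc (Suc (Suc n)) - s ^ Suc (Suc (Suc n))"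
    by (simp add: algebra_simps)
  finally show ?case .
qed

lemma one_plus_mult_diagonal_binomial_sum:
  fixes x :: "'a::comm_ring_1"
  shows "(1 + x) * diagonal_binomial_sum x (1 - x) n = 1 - (- x) ^ Suc n"
  using diagonal_binomial_sum_roots[of 1 "- x" n] by simp

lemma Beta_real_pos: "(a::real) > 0 \<Longrightarrow> b > 0 \<Longrightarrow> Beta a b > 0"
  by (simp add: Beta_def)

lemma Gamma_real_add_of_nat: "(z::real) > 0 \<Longrightarrow> Gamma (z + real n) = pochhammer z n * Gamma z"
  by (simp add: pochhammer_Gamma Gamma_nonzero nonpos_Ints_def)

lemma Beta_add_of_nat:
  fixes a b :: real
  assumes "a > 0" "b > 0"
  shows "Beta (a + real k) (b + real j) =
    Beta a b * pochhammer a k * pochhammer b j / pochhammer (a + b) (k + j)"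
proof -
  have "Beta (a + real k) (b + real j) =
      Gamma (a + real k) * Gamma (b + real j) / Gamma ((a + b) + real (k + j))"
    by (simp add: Beta_def add_ac)
  also have "\<dots> = pochhammer a k * Gamma a * (pochhammer b j * Gamma b) /
      (pochhammer (a + b) (k + j) * Gamma (a + b))"
    using assms by (simp only: Gamma_real_add_of_nat add_pos_pos)
  also have "\<dots> = Beta a b * pochhammer a k * pochhammer b j / pochhammer (a + b) (k + j)"
    by (simp add: Beta_def mult_ac)
  finally show ?thesis .
qed

lemma prod_arith_progression_eq_pochhammer:
  fixes t h :: "'a::field"
  assumes "h \<noteq> 0"
  shows "(\<Prod>i<k. t + of_nat i * h) = h ^ k * pochhammer (t / h) k"
proof -
  have "(\<Prod>i<k. t + of_nat i * h) = (\<Prod>i<k. h * (t / h + of_nat i))"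
    using assms by (intro prod.cong) (simp_all add: field_simps)
  then show ?thesis by (simp add: prod.distrib pochhammer_prod atLeast0LessThan)
qed

lemma hBernstein_eq_Beta_ratio:
  assumes "0 < t" "t < 1" "0 < h" "k \<le> m"
  shows "hBernstein m k t h =
    real (m choose k) * Beta (t / h + real k) ((1 - t) / h + real (m - k)) / Beta (t / h) ((1 - t) / h)"
proof -
  have a: "t / h > 0" and b: "(1 - t) / h > 0" using assms by simp_all
  have "t / h + (1 - t) / h = 1 / h" using assms by (simp add: field_simps)
  then have Beta_ratio: "Beta (t / h + real k) ((1 - t) / h + real (m - k)) / Beta (t / h) ((1 - t) / h) =
      pochhammer (t / h) k * pochhammer ((1 - t) / h) (m - k) / pochhammer (1 / h) m"
    using Beta_add_of_nat[OF a b, of k "m - k"] Beta_real_pos[OF a b] assms(4) by simp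
  have "hBernstein m k t h = real (m choose k) * (h ^ k * pochhammer (t / h) k) *
      (h ^ (m - k) * pochhammer ((1 - t) / h) (m - k)) / (h ^ m * pochhammer (1 / h) m)"
    using assms by (simp add: hBernstein_def prod_arith_progression_eq_pochhammer)
  also have "h ^ m = h ^ k * h ^ (m - k)"
    using assms(4) by (simp flip: power_add)
  also have "real (m choose k) * (h ^ k * pochhammer (t / h) k) *
      (h ^ (m - k) * pochhammer ((1 - t) / h) (m - k)) / (h ^ k * h ^ (m - k) * pochhammer (1 / h) m) =
      real (m choose k) *
      (pochhammer (t / h) k * pochhammer ((1 - t) / h) (m - k) / pochhammer (1 / h) m)"
    using assms(3) by simp
  finally show ?thesis
    by (metis Beta_ratio times_divide_eq_right)
qed

lemma power_mult_powr: "(x::real) \<ge> 0 \<Longrightarrow> x ^ k * x powr c = x powr (c + real k)"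
  by (cases "x = 0") (simp_all add: powr_add powr_realpow)

lemma has_integral_Beta_real_add_of_nat:
  fixes a b :: real
  assumes "a > 0" "b > 0"
  shows "((\<lambda>x. x ^ k * (1 - x) ^ j * (x powr (a - 1) * (1 - x) powr (b - 1)))
           has_integral Beta (a + real k) (b + real j)) {0..1}"
proof (rule has_integral_eq[OF _ has_integral_Beta_real])
  fix x :: real
  assume "x \<in> {0..1}"
  then show "x powr (a + real k - 1) * (1 - x) powr (b + real j - 1) =
      x ^ k * (1 - x) ^ j * (x powr (a - 1) * (1 - x) powr (b - 1))"
    using power_mult_powr[of x k "a - 1"] power_mult_powr[of "1 - x" j "b - 1"]
    by (simp add: algebra_simps)
qed (use assms in simp_all)

lemma diagonal_binomial_sum_mult_Beta_weight:
  fixes a b x B :: real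
  assumes "0 \<le> x"
  shows "diagonal_binomial_sum x (1 - x) n * (x powr (a - 1) * (1 - x) powr (b - 1)) / B =
    x powr (a - 1) * (1 - x) powr (b - 1) / ((1 + x) * B) +
    (-1) ^ (n + 2) * (x powr (a + real n) * (1 - x) powr (b - 1) / ((1 + x) * B))"
proof -
  define W where "W = x powr (a - 1) * (1 - x) powr (b - 1)"
  have "x powr (a + real n) * (1 - x) powr (b - 1) = x ^ Suc n * W"
    using power_mult_powr[OF assms, of "Suc n" "a - 1"] by (simp add: W_def mult.assoc)
  moreover have "diagonal_binomial_sum x (1 - x) n = (1 + (-1) ^ (n + 2) * x ^ Suc n) / (1 + x)"
    using one_plus_mult_diagonal_binomial_sum[of x n] assms
    by (simp add: eq_divide_eq power_minus[of x] mult.commute)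
  ultimately show ?thesis
    unfolding W_def[symmetric] by (simp add: field_simps add_divide_distrib)
qed

lemma has_integral_hBernstein:
  assumes "0 < t" "t < 1" "0 < h"
  shows "((\<lambda>x. real (m choose k) * x ^ k * (1 - x) ^ (m - k) *
                (x powr (t / h - 1) * (1 - x) powr ((1 - t) / h - 1)) / Beta (t / h) ((1 - t) / h))
           has_integral hBernstein m k t h) {0..1}"
proof (cases "k \<le> m")
  case True
  have "((\<lambda>x. real (m choose k) / Beta (t / h) ((1 - t) / h) *
            (x ^ k * (1 - x) ^ (m - k) * (x powr (t / h - 1) * (1 - x) powr ((1 - t) / h - 1))))
         has_integral real (m choose k) / Beta (t / h) ((1 - t) / h) *
           Beta (t / h + real k) ((1 - t) / h + real (m - k))) {0..1}"
    using assms by (intro has_integral_mult_right has_integral_Beta_real_add_of_nat) simp_all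
  then show ?thesis
    by (simp add: hBernstein_eq_Beta_ratio[OF assms True] mult_ac)
qed (simp add: hBernstein_def not_le binomial_eq_0)

lemma has_integral_diagonal_sum_hBernstein:
  assumes "0 < t" "t < 1" "0 < h"
  shows "((\<lambda>x. diagonal_binomial_sum x (1 - x) n *
                (x powr (t / h - 1) * (1 - x) powr ((1 - t) / h - 1)) / Beta (t / h) ((1 - t) / h))
           has_integral (\<Sum>k\<le>n. hBernstein (n - k) k t h)) {0..1}"
proof -
  have "(n - k) - k = n - 2 * k" for k by simp
  then show ?thesis
    using has_integral_sum[OF finite_atMost has_integral_hBernstein[OF assms, of "n - k" k for k]]
    by (simp add: diagonal_binomial_sum_def sum_distrib_right sum_divide_distrib)
qed

lemma set_integrable_Beta_weight_div_one_plus: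
  fixes a b c :: real
  assumes "a > 0" "b > 0"
  shows "set_integrable lborel {0..1} (\<lambda>x. x powr (a - 1) * (1 - x) powr (b - 1) / ((1 + x) * c))"
proof (rule set_integrable_bound[OF set_integrable_divide[OF integrable_Beta[OF assms], of c]])
  show "set_borel_measurable lborel {0..1} (\<lambda>x. x powr (a - 1) * (1 - x) powr (b - 1) / ((1 + x) * c))"
    unfolding set_borel_measurable_def by measurable
  have "norm (w / ((1 + x) * c)) \<le> norm (w / c)" if "x \<in> {0..1}" for w x :: real
  proof -
    have "\<bar>w / c\<bar> / (1 + x) \<le> \<bar>w / c\<bar> / 1"
      using that by (intro divide_left_mono) auto
    then show ?thesis using that by (simp add: abs_mult mult.commute)
  qed
  then show "AE x in lborel. x \<in> {0..1} \<longrightarrow>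
      norm (x powr (a - 1) * (1 - x) powr (b - 1) / ((1 + x) * c)) \<le>
      norm (x powr (a - 1) * (1 - x) powr (b - 1) / c)"
    by (intro AE_I2 impI) blast
qed

lemma has_integral_interval_integral:
  fixes f :: "real \<Rightarrow> real"
  assumes "a \<le> b" "set_integrable lborel {a..b} f"
  shows "(f has_integral (LBINT x=a..b. f x)) {a..b}"
  using interval_integral_eq_integral[OF assms] set_borel_integral_eq_integral(1)[OF assms(2)]
  by (simp add: integrable_integral)

theorem mainTheorem20:
  fixes t h :: real and n :: nat
  assumes "0 < t" "t < 1" "0 < h"
  defines "a \<equiv> t / h" and "b \<equiv> (1 - t) / h"
  shows "(\<Sum>k\<le>n. hBernstein (n - k) k t h) =
           (LBINT x=0..1. x powr (a - 1) * (1 - x) powr (b - 1) / ((1 + x) * Beta a b))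
         + (-1) ^ (n + 2) *
           (LBINT x=0..1. x powr (a + real n) * (1 - x) powr (b - 1) / ((1 + x) * Beta a b))"
proof -
  have a: "a > 0" and b: "b > 0" using assms(1-3) unfolding a_def b_def by simp_all
  define w where "w = (\<lambda>x::real. x powr (a - 1) * (1 - x) powr (b - 1) / ((1 + x) * Beta a b))"
  define v where "v = (\<lambda>x::real. x powr (a + real n) * (1 - x) powr (b - 1) / ((1 + x) * Beta a b))"
  have "((\<lambda>x. w x + (-1) ^ (n + 2) * v x) has_integral (\<Sum>k\<le>n. hBernstein (n - k) k t h)) {0..1}"
    using has_integral_diagonal_sum_hBernstein[OF assms(1-3), of n]
    by (rule has_integral_eq[rotated])
      (simp add: diagonal_binomial_sum_mult_Beta_weight w_def v_def a_def b_def)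
  moreover have "(w has_integral (LBINT x=0..1. w x)) {0..1}"
    using has_integral_interval_integral[of 0 1 w]
      set_integrable_Beta_weight_div_one_plus[OF a b, of "Beta a b"]
    by (simp add: w_def zero_ereal_def one_ereal_def)
  moreover have "(v has_integral (LBINT x=0..1. v x)) {0..1}"
    using has_integral_interval_integral[of 0 1 v]
      set_integrable_Beta_weight_div_one_plus[of "a + real n + 1" b "Beta a b"] a b
    by (simp add: v_def zero_ereal_def one_ereal_def)
  ultimately have "(\<Sum>k\<le>n. hBernstein (n - k) k t h) =
      (LBINT x=0..1. w x) + (-1) ^ (n + 2) * (LBINT x=0..1. v x)"
    by (intro has_integral_unique[OF _ has_integral_add[OF _ has_integral_mult_right]])
  then show ?thesis by (simp only: w_def v_def)
qed

end
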